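(* Let $a\ge 1$ and $b\ge 0$ be integers, and let $G_{a,b}$ be any cubic graph obtained as follows: take $a$ copies of the $2$-pole $A$ obtained from the Petersen graph by cutting an edge into two dangling edges, and $b$ copies of the $2$-pole $B$ obtained from $K_4$ by cutting an edge into two dangling edges, arrange these $a+b$ $2$-poles in a cyclic order (arbitrary), and for each consecutive pair join one dangling edge of the first to one dangling edge of the next (so each $2$-pole has one dangling edge joined to its predecessor and the other to its successor). Then $$m_3(G_{a,b}) = \frac{4a+2b}{5a+2b}.$$
   Context: For a bridgeless cubic graph $G$, $m_3(G)$ denotes the maximum, over all choices of three perfect matchings $M_1, M_2, M_3$ of $G$, of $|M_1\cup M_2\cup M_3|$, divided by $|E(G)|$. Cutting an edge $uv$ into a pair of dangling edges means deleting $uv$ and attaching one new half-edge (dangling edge) to $u$ and one to $v$; joining two dangling edges means merging them into a single edge between their end vertices. *)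

theory Defs
  imports Main Complex_Main
begin

text \<open>Graphs are given by a vertex set V and a set E of edges, each edge a 2-element set of vertices.\<close>

definition perfect_matching :: "'a set \<Rightarrow> 'a set set \<Rightarrow> 'a set set \<Rightarrow> bool" where
  "perfect_matching V E M \<longleftrightarrow> M \<subseteq> E \<and> (\<forall>v\<in>V. \<exists>!e. e \<in> M \<and> v \<in> e)"

definition m3 :: "'a set \<Rightarrow> 'a set set \<Rightarrow> real" where
  "m3 V E = real (Max {card (M1 \<union> M2 \<union> M3) | M1 M2 M3.
      perfect_matching V E M1 \<and> perfect_matching V E M2 \<and> perfect_matching V E M3})
     / real (card E)"

definition petersen_edges :: "nat set set" where
  "petersen_edges =
     {{i, (i + 1) mod 5} | i. i < 5} \<union> {{i, i + 5} | i. i < 5} \<union>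
     {{5 + i, 5 + (i + 2) mod 5} | i. i < 5}"

definition k4_edges :: "nat set set" where
  "k4_edges = {{u, v} | u v. u < 4 \<and> v < 4 \<and> u \<noteq> v}"

text \<open>2-pole: Petersen (t = True) or K4 (t = False) with edge {0,1} cut; dangling edges at 0 and 1.\<close>
definition pole_verts :: "bool \<Rightarrow> nat set" where
  "pole_verts t = {..<(if t then 10 else 4)}"

definition pole_edges :: "bool \<Rightarrow> nat set set" where
  "pole_edges t = (if t then petersen_edges else k4_edges) - {{0, 1}}"

text \<open>Which dangling end of block i is joined to the predecessor (in) / successor (out);
  fl i chooses between the two possibilities.\<close>
definition pole_in :: "(nat \<Rightarrow> bool) \<Rightarrow> nat \<Rightarrow> nat" where
  "pole_in fl i = (if fl i then 1 else 0)"

definition pole_out :: "(nat \<Rightarrow> bool) \<Rightarrow> nat \<Rightarrow> nat" where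
  "pole_out fl i = (if fl i then 0 else 1)"

text \<open>The ring G built from the cyclic sequence ts of 2-poles (True = Petersen pole A,
  False = K4 pole B); vertex (i, v) is local vertex v of block i.\<close>
definition ring_verts :: "bool list \<Rightarrow> (nat \<times> nat) set" where
  "ring_verts ts = {(i, v) | i v. i < length ts \<and> v \<in> pole_verts (ts ! i)}"

definition ring_edges :: "bool list \<Rightarrow> (nat \<Rightarrow> bool) \<Rightarrow> (nat \<times> nat) set set" where
  "ring_edges ts fl =
     {{(i, u), (i, v)} | i u v. i < length ts \<and> {u, v} \<in> pole_edges (ts ! i)} \<union>
     {{(i, pole_out fl i), (Suc i mod length ts, pole_in fl (Suc i mod length ts))} | i.
        i < length ts}"

end

theory Submission
  imports Defs
begin

text \<open>
  Cut every link of the ring between consecutive poles and charge it to the pole it leaves: a Petersen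
  pole then owns 15 edges and a \<open>K\<^sub>4\<close> pole 6, so \<open>G\<close> has \<open>15a + 6b\<close> edges. A Petersen pole has an
  even number of vertices, so a perfect matching of \<open>G\<close> uses both of its dangling edges or neither, and
  inside the pole it induces one of the six perfect matchings of the Petersen graph (the cut edge
  standing for the two dangling edges). Any three of these cover at most 12 edges, so three perfect
  matchings of \<open>G\<close> cover at most 12 of the edges owned by a Petersen pole and at most all 6 owned by a
  \<open>K\<^sub>4\<close> pole. Three explicit matchings, one of which contains every link, attain these bounds,
  whence \<open>m\<^sub>3(G) = (12a + 6b) / (15a + 6b)\<close>.
\<close>

text \<open>Unlike \<open>length (filter id xs) = 1\<close>, this unfolds on explicit lists into a propositional
  formula, which makes the finite case analyses below decidable by \<open>simp\<close> and \<open>argo\<close>.\<close>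

fun exactly_one :: "bool list \<Rightarrow> bool" where
  "exactly_one [] = False"
| "exactly_one (x # xs) = ((x \<and> (\<forall>y\<in>set xs. \<not> y)) \<or> (\<not> x \<and> exactly_one xs))"

lemma exactly_one_map_iff: "distinct xs \<Longrightarrow> exactly_one (map P xs) \<longleftrightarrow> (\<exists>!x. x \<in> set xs \<and> P x)"
  by (induction xs) auto

lemma perfect_matching_iff_exactly_one:
  assumes "M \<subseteq> E"
    and "\<And>v. v \<in> V \<Longrightarrow> distinct (inc v) \<and> set (inc v) = {e \<in> E. v \<in> e}"
  shows "perfect_matching V E M \<longleftrightarrow> (\<forall>v\<in>V. exactly_one (map (\<lambda>e. e \<in> M) (inc v)))"
proof -
  have "exactly_one (map (\<lambda>e. e \<in> M) (inc v)) \<longleftrightarrow> (\<exists>!e. e \<in> M \<and> v \<in> e)" if "v \<in> V" for v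
  proof -
    have "e \<in> set (inc v) \<and> e \<in> M \<longleftrightarrow> e \<in> M \<and> v \<in> e" for e
      using assms that by auto
    then show ?thesis
      using assms(2)[OF that] exactly_one_map_iff[of "inc v"] by simp
  qed
  then show ?thesis
    using assms(1) unfolding perfect_matching_def by auto
qed

lemma card_subset_UN_distinct_lists:
  assumes "finite I" and "U \<subseteq> (\<Union>i\<in>I. set (xs i))"
    and "\<And>i. i \<in> I \<Longrightarrow> distinct (xs i)"
    and "\<And>i j. i \<in> I \<Longrightarrow> j \<in> I \<Longrightarrow> i \<noteq> j \<Longrightarrow> set (xs i) \<inter> set (xs j) = {}"
  shows "card U = (\<Sum>i\<in>I. length (filter (\<lambda>x. x \<in> U) (xs i)))"
proof -
  have "U = (\<Union>i\<in>I. U \<inter> set (xs i))"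
    using assms(2) by auto
  also have "card \<dots> = (\<Sum>i\<in>I. card (U \<inter> set (xs i)))"
    using assms(1,4) by (intro card_UN_disjoint) auto
  also have "\<dots> = (\<Sum>i\<in>I. length (filter (\<lambda>x. x \<in> U) (xs i)))"
    using assms(3) by (intro sum.cong) (simp_all add: distinct_length_filter Int_commute)
  finally show ?thesis .
qed

lemma length_filter_mem_le_card:
  assumes "distinct xs" and "finite A"
  shows "length (filter (\<lambda>x. x \<in> A) xs) \<le> card A"
proof -
  have "length (filter (\<lambda>x. x \<in> A) xs) = card (A \<inter> set xs)"
    using distinct_length_filter[OF assms(1)] by simp
  also have "\<dots> \<le> card A"
    using assms(2) by (intro card_mono) auto
  finally show ?thesis .
qed

lemma sum_nth_bool_if:
  "(\<Sum>i<length ts. if ts ! i then p else q) = p * length (filter id ts) + q * length (filter Not ts)"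
  by (induction ts) (simp_all add: sum.lessThan_Suc_shift del: sum.lessThan_Suc)

definition pole_edge_list :: "bool \<Rightarrow> nat set list" where
  "pole_edge_list t =
     (if t then [{1,2},{2,3},{3,4},{0,4},{0,5},{1,6},{2,7},{3,8},{4,9},{5,7},{6,8},{7,9},{5,8},{6,9}]
      else [{0,2},{0,3},{1,2},{1,3},{2,3}])"

lemma set_pole_edge_list: "set (pole_edge_list t) = pole_edges t"
proof -
  have five: "{f i | i. i < (5::nat)} = {f 0, f 1, f 2, f 3, f 4}" for f :: "nat \<Rightarrow> nat set"
    by (auto simp: less_Suc_eq numeral_eq_Suc)
  have k4: "{(u,v). u < 4 \<and> v < (4::nat) \<and> u \<noteq> v} =
      {(0,1),(0,2),(0,3),(1,0),(1,2),(1,3),(2,0),(2,1),(2,3),(3,0),(3,1),(3,2)}"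
    by (auto simp: less_Suc_eq numeral_eq_Suc)
  have "k4_edges = (\<lambda>(u,v). {u,v}) ` {(u,v). u < 4 \<and> v < (4::nat) \<and> u \<noteq> v}"
    unfolding k4_edges_def by auto
  then have "(if t then petersen_edges else k4_edges) = insert {0,1} (set (pole_edge_list t))"
    unfolding petersen_edges_def pole_edge_list_def five k4
    by (simp add: insert_commute numeral_2_eq_2[symmetric])
  moreover have "{0,1} \<notin> set (pole_edge_list t)"
    unfolding pole_edge_list_def by (auto simp: doubleton_eq_iff)
  ultimately show ?thesis
    unfolding pole_edges_def by simp
qed

lemma distinct_pole_edge_list: "distinct (pole_edge_list t)"
  unfolding pole_edge_list_def by (auto simp: doubleton_eq_iff)

lemma pole_edge_doubleton: "e \<in> pole_edges t \<Longrightarrow> \<exists>u v. e = {u, v}"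
  unfolding set_pole_edge_list[symmetric] pole_edge_list_def by (auto split: if_splits)

lemma pole_in_neq_pole_out: "pole_in fl i \<noteq> pole_out fl i"
  unfolding pole_in_def pole_out_def by simp

lemma pole_out_pole_in_eq_cut_edge: "{pole_out fl i, pole_in fl i} = {0, 1}"
  unfolding pole_in_def pole_out_def by auto

definition block_edge :: "nat \<Rightarrow> nat set \<Rightarrow> (nat \<times> nat) set" where
  "block_edge i e = Pair i ` e"

definition ring_link :: "bool list \<Rightarrow> (nat \<Rightarrow> bool) \<Rightarrow> nat \<Rightarrow> (nat \<times> nat) set" where
  "ring_link ts fl i = {(i, pole_out fl i), (Suc i mod length ts, pole_in fl (Suc i mod length ts))}"

definition block_edge_list :: "bool list \<Rightarrow> (nat \<Rightarrow> bool) \<Rightarrow> nat \<Rightarrow> (nat \<times> nat) set list" where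
  "block_edge_list ts fl i = ring_link ts fl i # map (block_edge i) (pole_edge_list (ts ! i))"

lemma block_edge_eq_iff: "e \<noteq> {} \<Longrightarrow> block_edge i e = block_edge j e' \<longleftrightarrow> i = j \<and> e = e'"
  unfolding block_edge_def by auto

lemma inj_block_edge: "inj (block_edge i)"
  unfolding block_edge_def inj_def by auto

lemma inj_ring_link: "inj (ring_link ts fl)"
proof (rule injI)
  fix i j assume "ring_link ts fl i = ring_link ts fl j"
  moreover have "(i, pole_out fl i) \<in> ring_link ts fl i"
    unfolding ring_link_def by simp
  ultimately have "(i, pole_out fl i) \<in> ring_link ts fl j"
    by simp
  then have "(i, pole_out fl i) = (j, pole_out fl j) \<or>
      (i, pole_out fl i) = (Suc j mod length ts, pole_in fl (Suc j mod length ts))"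
    unfolding ring_link_def by simp
  then show "i = j"
    using pole_in_neq_pole_out by (metis prod.inject)
qed

lemma ring_link_neq_block_edge:
  assumes "e \<in> pole_edges t"
  shows "ring_link ts fl j \<noteq> block_edge i e"
proof
  assume eq: "ring_link ts fl j = block_edge i e"
  then have "j = i" and "Suc j mod length ts = i"
    unfolding ring_link_def block_edge_def by auto
  then have "ring_link ts fl j = block_edge i {pole_out fl i, pole_in fl i}"
    unfolding ring_link_def block_edge_def by simp
  then have "e = {0, 1}"
    using eq inj_block_edge pole_out_pole_in_eq_cut_edge by (metis injD)
  then show False using assms unfolding pole_edges_def by simp
qed

lemma set_block_edge_list:
  "set (block_edge_list ts fl i) = insert (ring_link ts fl i) (block_edge i ` pole_edges (ts ! i))"
  unfolding block_edge_list_def by (simp add: set_pole_edge_list)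

lemma ring_edges_eq_UN_block_edge_lists:
  "ring_edges ts fl = (\<Union>i<length ts. set (block_edge_list ts fl i))"
proof -
  have "{{(i, u), (i, v)} | i u v. i < length ts \<and> {u, v} \<in> pole_edges (ts ! i)} =
      (\<Union>i<length ts. block_edge i ` pole_edges (ts ! i))"
  proof (intro equalityI subsetI)
    fix x assume "x \<in> {{(i, u), (i, v)} | i u v. i < length ts \<and> {u, v} \<in> pole_edges (ts ! i)}"
    then obtain i u v where "i < length ts" "{u, v} \<in> pole_edges (ts ! i)" "x = block_edge i {u, v}"
      unfolding block_edge_def by auto
    then show "x \<in> (\<Union>i<length ts. block_edge i ` pole_edges (ts ! i))"
      by blast
  next
    fix x assume "x \<in> (\<Union>i<length ts. block_edge i ` pole_edges (ts ! i))"
    then obtain i e where "i < length ts" "e \<in> pole_edges (ts ! i)" "x = block_edge i e"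
      by blast
    moreover obtain u v where "e = {u, v}"
      using pole_edge_doubleton \<open>e \<in> pole_edges (ts ! i)\<close> by blast
    ultimately show "x \<in> {{(i, u), (i, v)} | i u v. i < length ts \<and> {u, v} \<in> pole_edges (ts ! i)}"
      unfolding block_edge_def by auto
  qed
  moreover have "{ring_link ts fl i | i. i < length ts} = ring_link ts fl ` {..<length ts}"
    by auto
  ultimately show ?thesis
    unfolding ring_edges_def set_block_edge_list ring_link_def[symmetric] by auto
qed

lemma distinct_block_edge_list: "distinct (block_edge_list ts fl i)"
  unfolding block_edge_list_def
  using ring_link_neq_block_edge inj_on_subset[OF inj_block_edge subset_UNIV]
  by (auto simp: distinct_map distinct_pole_edge_list set_pole_edge_list)

lemma block_edge_lists_disjoint:
  assumes "i \<noteq> j"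
  shows "set (block_edge_list ts fl i) \<inter> set (block_edge_list ts fl j) = {}"
proof -
  have "block_edge i e \<noteq> block_edge j e'" if "e \<in> pole_edges t" for e e' t
    using that assms pole_edge_doubleton block_edge_eq_iff by (metis insert_not_empty)
  moreover have "ring_link ts fl i \<noteq> ring_link ts fl j"
    using assms inj_ring_link by (metis injD)
  ultimately show ?thesis
    unfolding set_block_edge_list using ring_link_neq_block_edge by blast
qed

lemma card_ring_subset:
  assumes "U \<subseteq> ring_edges ts fl"
  shows "card U = (\<Sum>i<length ts. length (filter (\<lambda>e. e \<in> U) (block_edge_list ts fl i)))"
  using assms unfolding ring_edges_eq_UN_block_edge_lists
  by (intro card_subset_UN_distinct_lists distinct_block_edge_list block_edge_lists_disjoint) auto

lemma card_ring_edges: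
  "card (ring_edges ts fl) = 15 * length (filter id ts) + 6 * length (filter Not ts)"
proof -
  have "length (filter (\<lambda>e. e \<in> ring_edges ts fl) (block_edge_list ts fl i)) = (if ts ! i then 15 else 6)"
    if "i < length ts" for i
  proof -
    have "filter (\<lambda>e. e \<in> ring_edges ts fl) (block_edge_list ts fl i) = block_edge_list ts fl i"
      using that unfolding ring_edges_eq_UN_block_edge_lists by (auto simp: filter_id_conv)
    then show ?thesis
      unfolding block_edge_list_def pole_edge_list_def by simp
  qed
  then show ?thesis
    using card_ring_subset[of "ring_edges ts fl" ts fl] by (simp add: sum_nth_bool_if)
qed

definition dangling_link :: "bool list \<Rightarrow> (nat \<Rightarrow> bool) \<Rightarrow> nat \<Rightarrow> nat \<Rightarrow> (nat \<times> nat) set" where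
  "dangling_link ts fl i v =
     (if v = pole_out fl i then ring_link ts fl i else ring_link ts fl ((i + length ts - 1) mod length ts))"

definition incident_edge_list :: "bool list \<Rightarrow> (nat \<Rightarrow> bool) \<Rightarrow> nat \<Rightarrow> nat \<Rightarrow> (nat \<times> nat) set list" where
  "incident_edge_list ts fl i v =
     (if v < 2 then [dangling_link ts fl i v] else []) @
     map (block_edge i) (filter (\<lambda>e. v \<in> e) (pole_edge_list (ts ! i)))"

lemma Suc_mod_pred: "i < n \<Longrightarrow> Suc ((i + n - 1) mod n) mod n = i"
  by (cases i) (auto simp: mod_if)

lemma pred_Suc_mod: "j < n \<Longrightarrow> (Suc j mod n + n - 1) mod n = j"
  by (auto simp: mod_if)

lemma dangling_link_in_ring_links:
  assumes "i < length ts"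
  shows "dangling_link ts fl i v \<in> ring_link ts fl ` {..<length ts}"
proof -
  have "(i + length ts - 1) mod length ts < length ts"
    using assms by (intro mod_less_divisor) auto
  then show ?thesis
    using assms unfolding dangling_link_def by auto
qed

lemma mem_ring_link_iff:
  assumes "i < length ts" "k < length ts"
  shows "(i, v) \<in> ring_link ts fl k \<longleftrightarrow> v < 2 \<and> dangling_link ts fl i v = ring_link ts fl k"
proof
  assume "(i, v) \<in> ring_link ts fl k"
  then consider "i = k" "v = pole_out fl k" | "i = Suc k mod length ts" "v = pole_in fl i"
    unfolding ring_link_def by auto
  then show "v < 2 \<and> dangling_link ts fl i v = ring_link ts fl k"
  proof cases
    case 2
    then have "v \<noteq> pole_out fl i"
      using pole_in_neq_pole_out by metis
    with 2 show ?thesis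
      using pred_Suc_mod[OF assms(2)] unfolding dangling_link_def pole_in_def by auto
  qed (auto simp: dangling_link_def pole_out_def)
next
  assume "v < 2 \<and> dangling_link ts fl i v = ring_link ts fl k"
  then have "v = pole_out fl i \<or> v = pole_in fl i" and "dangling_link ts fl i v = ring_link ts fl k"
    unfolding pole_in_def pole_out_def by auto
  then show "(i, v) \<in> ring_link ts fl k"
    using Suc_mod_pred[OF assms(1)] unfolding dangling_link_def ring_link_def
    by (auto split: if_splits)
qed

lemma set_incident_edge_list:
  assumes "i < length ts"
  shows "set (incident_edge_list ts fl i v) = {e \<in> ring_edges ts fl. (i, v) \<in> e}"
proof -
  let ?links = "ring_link ts fl ` {..<length ts}"
  let ?blocks = "\<Union>j<length ts. block_edge j ` pole_edges (ts ! j)"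
  have links: "{e \<in> ?links. (i, v) \<in> e} = (if v < 2 then {dangling_link ts fl i v} else {})"
  proof -
    obtain k where "k < length ts" "dangling_link ts fl i v = ring_link ts fl k"
      using dangling_link_in_ring_links[OF assms] by blast
    then show ?thesis
      using mem_ring_link_iff[OF assms] by auto
  qed
  have blocks: "{e \<in> ?blocks. (i, v) \<in> e} = block_edge i ` {e \<in> pole_edges (ts ! i). v \<in> e}"
    using assms unfolding block_edge_def by auto
  have "ring_edges ts fl = ?links \<union> ?blocks"
    unfolding ring_edges_eq_UN_block_edge_lists set_block_edge_list by auto
  then have "{e \<in> ring_edges ts fl. (i, v) \<in> e} = {e \<in> ?links. (i, v) \<in> e} \<union> {e \<in> ?blocks. (i, v) \<in> e}"
    by blast
  also have "\<dots> = set (incident_edge_list ts fl i v)"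
    unfolding links blocks incident_edge_list_def by (simp add: set_pole_edge_list)
  finally show ?thesis ..
qed

lemma distinct_incident_edge_list: "distinct (incident_edge_list ts fl i v)"
proof -
  have "dangling_link ts fl i v \<notin> block_edge i ` pole_edges (ts ! i)"
    using ring_link_neq_block_edge unfolding dangling_link_def by auto
  then show ?thesis
    unfolding incident_edge_list_def
    using distinct_pole_edge_list inj_on_subset[OF inj_block_edge subset_UNIV]
    by (auto simp: distinct_map set_pole_edge_list)
qed

lemma perfect_matching_ring_iff:
  assumes "M \<subseteq> ring_edges ts fl"
  shows "perfect_matching (ring_verts ts) (ring_edges ts fl) M \<longleftrightarrow>
    (\<forall>i<length ts. \<forall>v\<in>pole_verts (ts ! i). exactly_one (map (\<lambda>e. e \<in> M) (incident_edge_list ts fl i v)))"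
proof -
  have "perfect_matching (ring_verts ts) (ring_edges ts fl) M \<longleftrightarrow>
      (\<forall>x\<in>ring_verts ts. exactly_one (map (\<lambda>e. e \<in> M) (case_prod (incident_edge_list ts fl) x)))"
    using assms distinct_incident_edge_list set_incident_edge_list
    by (intro perfect_matching_iff_exactly_one) (auto simp: ring_verts_def)
  then show ?thesis
    unfolding ring_verts_def by auto
qed

lemma map_mem_incident_edge_list:
  "map (\<lambda>e. e \<in> M) (incident_edge_list ts fl i v) =
     (if v < 2 then [dangling_link ts fl i v \<in> M] else []) @
     map (\<lambda>e. block_edge i e \<in> M) (filter (\<lambda>e. v \<in> e) (pole_edge_list (ts ! i)))"
  unfolding incident_edge_list_def by simp

section \<open>Upper bound\<close>

definition petersen_perfect_matchings :: "nat set set list" where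
  "petersen_perfect_matchings =
     [{{0,1},{2,3},{4,9},{5,7},{6,8}}, {{0,1},{3,4},{2,7},{5,8},{6,9}},
      {{1,2},{3,4},{0,5},{6,8},{7,9}}, {{1,2},{0,4},{3,8},{5,7},{6,9}},
      {{2,3},{0,4},{1,6},{7,9},{5,8}}, {{0,5},{1,6},{2,7},{3,8},{4,9}}]"

lemma finite_petersen_perfect_matching: "S \<in> set petersen_perfect_matchings \<Longrightarrow> finite S"
  unfolding petersen_perfect_matchings_def by auto

lemma card_union_petersen_perfect_matchings:
  assumes "M1 \<in> set petersen_perfect_matchings" "M2 \<in> set petersen_perfect_matchings"
    "M3 \<in> set petersen_perfect_matchings"
  shows "card (M1 \<union> M2 \<union> M3) \<le> 12"
proof -
  have "\<forall>M1\<in>set petersen_perfect_matchings. \<forall>M2\<in>set petersen_perfect_matchings.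
      \<forall>M3\<in>set petersen_perfect_matchings. card (M1 \<union> M2 \<union> M3) \<le> 12"
    unfolding petersen_perfect_matchings_def by code_simp
  then show ?thesis
    using assms by blast
qed

text \<open>The constraints at the ten vertices of a Petersen pole form a propositional formula in the
  literals \<open>X 0\<close>, \<open>X 1\<close> (the links at the dangling vertices) and \<open>\<beta> e\<close> (the inner edges). Its models are
  the six perfect matchings of the Petersen graph, the cut edge \<open>{0,1}\<close> standing for the two links; the
  parity argument forcing \<open>X 0 = X 1\<close> is part of this case analysis.\<close>

lemma petersen_pole_local_matching:
  fixes \<beta> :: "nat set \<Rightarrow> bool" and X :: "nat \<Rightarrow> bool"
  assumes "\<forall>v<10. exactly_one ((if v < 2 then [X v] else []) @
                                 map \<beta> (filter (\<lambda>e. v \<in> e) (pole_edge_list True)))"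
  shows "X 0 = X 1 \<and> (\<exists>S\<in>set petersen_perfect_matchings.
           (X 0 \<longleftrightarrow> {0,1} \<in> S) \<and> (\<forall>e\<in>set (pole_edge_list True). \<beta> e \<longleftrightarrow> e \<in> S))"
proof -
  have "exactly_one ((if v < 2 then [X v] else []) @ map \<beta> (filter (\<lambda>e. v \<in> e) (pole_edge_list True)))"
    if "v < 10" for v
    using assms that by blast
  from this[of 0] this[of 1] this[of 2] this[of 3] this[of 4]
    this[of 5] this[of 6] this[of 7] this[of 8] this[of 9]
  show ?thesis
    unfolding petersen_perfect_matchings_def pole_edge_list_def by (simp add: doubleton_eq_iff) argo
qed

lemma petersen_block_matching:
  assumes "perfect_matching (ring_verts ts) (ring_edges ts fl) M"
    and "i < length ts" and "ts ! i"
  shows "\<exists>S\<in>set petersen_perfect_matchings. (ring_link ts fl i \<in> M \<longleftrightarrow> {0,1} \<in> S) \<and>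
    (\<forall>e\<in>pole_edges True. block_edge i e \<in> M \<longleftrightarrow> e \<in> S)"
proof -
  have "M \<subseteq> ring_edges ts fl"
    using assms(1) unfolding perfect_matching_def by blast
  then have "\<forall>v\<in>pole_verts (ts ! i). exactly_one (map (\<lambda>e. e \<in> M) (incident_edge_list ts fl i v))"
    using assms(1,2) perfect_matching_ring_iff by simp
  moreover have "ts ! i = True" "pole_verts True = {..<10}"
    using assms(3) unfolding pole_verts_def by simp_all
  ultimately have "\<forall>v<10. exactly_one ((if v < 2 then [dangling_link ts fl i v \<in> M] else []) @
      map (\<lambda>e. block_edge i e \<in> M) (filter (\<lambda>e. v \<in> e) (pole_edge_list True)))"
    by (simp add: map_mem_incident_edge_list)
  from petersen_pole_local_matching[OF this] obtain S where S: "S \<in> set petersen_perfect_matchings"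
    and parity: "dangling_link ts fl i 0 \<in> M \<longleftrightarrow> dangling_link ts fl i 1 \<in> M"
    and cut: "dangling_link ts fl i 0 \<in> M \<longleftrightarrow> {0,1} \<in> S"
    and inner: "\<forall>e\<in>set (pole_edge_list True). block_edge i e \<in> M \<longleftrightarrow> e \<in> S"
    by blast
  have "ring_link ts fl i = dangling_link ts fl i 0 \<or> ring_link ts fl i = dangling_link ts fl i 1"
    unfolding dangling_link_def pole_out_def by (cases "fl i") simp_all
  then have "ring_link ts fl i \<in> M \<longleftrightarrow> {0,1} \<in> S"
    using parity cut by auto
  with S inner show ?thesis
    unfolding set_pole_edge_list by blast
qed

lemma petersen_block_count_le:
  assumes "perfect_matching (ring_verts ts) (ring_edges ts fl) M1"
    and "perfect_matching (ring_verts ts) (ring_edges ts fl) M2"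
    and "perfect_matching (ring_verts ts) (ring_edges ts fl) M3"
    and "i < length ts" and "ts ! i"
  shows "length (filter (\<lambda>e. e \<in> M1 \<union> M2 \<union> M3) (block_edge_list ts fl i)) \<le> 12"
proof -
  from petersen_block_matching[OF assms(1,4,5)] obtain S1 where S1: "S1 \<in> set petersen_perfect_matchings"
    "ring_link ts fl i \<in> M1 \<longleftrightarrow> {0,1} \<in> S1" "\<forall>e\<in>pole_edges True. block_edge i e \<in> M1 \<longleftrightarrow> e \<in> S1"
    by blast
  from petersen_block_matching[OF assms(2,4,5)] obtain S2 where S2: "S2 \<in> set petersen_perfect_matchings"
    "ring_link ts fl i \<in> M2 \<longleftrightarrow> {0,1} \<in> S2" "\<forall>e\<in>pole_edges True. block_edge i e \<in> M2 \<longleftrightarrow> e \<in> S2"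
    by blast
  from petersen_block_matching[OF assms(3,4,5)] obtain S3 where S3: "S3 \<in> set petersen_perfect_matchings"
    "ring_link ts fl i \<in> M3 \<longleftrightarrow> {0,1} \<in> S3" "\<forall>e\<in>pole_edges True. block_edge i e \<in> M3 \<longleftrightarrow> e \<in> S3"
    by blast
  let ?S = "S1 \<union> S2 \<union> S3"
  have "filter (\<lambda>e. block_edge i e \<in> M1 \<union> M2 \<union> M3) (pole_edge_list True) =
      filter (\<lambda>e. e \<in> ?S) (pole_edge_list True)"
    using S1(3) S2(3) S3(3) by (intro filter_cong) (auto simp: set_pole_edge_list)
  with S1(2) S2(2) S3(2) assms(5)
  have "length (filter (\<lambda>e. e \<in> M1 \<union> M2 \<union> M3) (block_edge_list ts fl i)) =
      length (filter (\<lambda>e. e \<in> ?S) ({0,1} # pole_edge_list True))"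
    unfolding block_edge_list_def by (simp add: filter_map comp_def)
  also have "\<dots> \<le> card ?S"
    using distinct_pole_edge_list S1(1) S2(1) S3(1)
    by (intro length_filter_mem_le_card) (auto simp: set_pole_edge_list pole_edges_def finite_petersen_perfect_matching)
  also have "\<dots> \<le> 12"
    using S1(1) S2(1) S3(1) by (rule card_union_petersen_perfect_matchings)
  finally show ?thesis .
qed

lemma card_union_perfect_matchings_le:
  assumes "perfect_matching (ring_verts ts) (ring_edges ts fl) M1"
    and "perfect_matching (ring_verts ts) (ring_edges ts fl) M2"
    and "perfect_matching (ring_verts ts) (ring_edges ts fl) M3"
  shows "card (M1 \<union> M2 \<union> M3) \<le> 12 * length (filter id ts) + 6 * length (filter Not ts)"
proof -
  have "M1 \<union> M2 \<union> M3 \<subseteq> ring_edges ts fl"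
    using assms unfolding perfect_matching_def by blast
  then have "card (M1 \<union> M2 \<union> M3) =
      (\<Sum>i<length ts. length (filter (\<lambda>e. e \<in> M1 \<union> M2 \<union> M3) (block_edge_list ts fl i)))"
    by (rule card_ring_subset)
  also have "\<dots> \<le> (\<Sum>i<length ts. if ts ! i then 12 else 6)"
  proof (intro sum_mono)
    fix i assume "i \<in> {..<length ts}"
    moreover have "length (filter P (block_edge_list ts fl i)) \<le> 6" if "\<not> ts ! i" for P
      using that length_filter_le[of P "block_edge_list ts fl i"]
      unfolding block_edge_list_def pole_edge_list_def by simp
    ultimately show "length (filter (\<lambda>e. e \<in> M1 \<union> M2 \<union> M3) (block_edge_list ts fl i)) \<le>
        (if ts ! i then 12 else 6)"
      using petersen_block_count_le[OF assms] by simp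
  qed
  finally show ?thesis
    by (simp add: sum_nth_bool_if)
qed

section \<open>Three matchings attaining the bound\<close>

text \<open>With all links added for \<open>j = 0\<close>, these are the perfect matchings 1, 3 and 5 of
  \<open>petersen_perfect_matchings\<close> in a Petersen pole and the three perfect matchings of \<open>K\<^sub>4\<close> in a
  \<open>K\<^sub>4\<close> pole.\<close>

definition pole_cover_matching :: "nat \<Rightarrow> bool \<Rightarrow> nat set set" where
  "pole_cover_matching j t =
     (if t then [{{2,3},{4,9},{5,7},{6,8}}, {{1,2},{3,4},{0,5},{6,8},{7,9}}, {{2,3},{0,4},{1,6},{7,9},{5,8}}] ! j
      else [{{2,3}}, {{0,2},{1,3}}, {{0,3},{1,2}}] ! j)"

definition cover_matching :: "bool list \<Rightarrow> (nat \<Rightarrow> bool) \<Rightarrow> nat \<Rightarrow> (nat \<times> nat) set set" where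
  "cover_matching ts fl j =
     (\<Union>i<length ts. block_edge i ` pole_cover_matching j (ts ! i)) \<union>
     (if j = 0 then ring_link ts fl ` {..<length ts} else {})"

lemma pole_cover_matching_subset:
  assumes "j < 3"
  shows "pole_cover_matching j t \<subseteq> pole_edges t"
proof -
  have "\<forall>j\<in>{..<3}. \<forall>t. pole_cover_matching j t \<subseteq> set (pole_edge_list t)"
    unfolding pole_cover_matching_def pole_edge_list_def
    by (simp add: all_bool_eq lessThan_nat_numeral doubleton_eq_iff)
  then show ?thesis
    using assms by (simp add: set_pole_edge_list)
qed

lemma exactly_one_pole_cover_matching:
  assumes "j < 3" and "v \<in> pole_verts t"
  shows "exactly_one ((if v < 2 then [j = 0] else []) @
    map (\<lambda>e. e \<in> pole_cover_matching j t) (filter (\<lambda>e. v \<in> e) (pole_edge_list t)))"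
proof -
  have "\<forall>t. \<forall>j\<in>{..<3}. \<forall>v\<in>pole_verts t. exactly_one ((if v < 2 then [j = 0] else []) @
    map (\<lambda>e. e \<in> pole_cover_matching j t) (filter (\<lambda>e. v \<in> e) (pole_edge_list t)))"
    unfolding pole_cover_matching_def pole_edge_list_def pole_verts_def
    by (simp add: all_bool_eq lessThan_nat_numeral doubleton_eq_iff)
  then show ?thesis
    using assms by blast
qed

lemma block_edge_mem_cover_matching:
  assumes "e \<in> pole_edges (ts ! i)"
  shows "block_edge i e \<in> cover_matching ts fl j \<longleftrightarrow> i < length ts \<and> e \<in> pole_cover_matching j (ts ! i)"
proof
  assume "block_edge i e \<in> cover_matching ts fl j"
  moreover have "block_edge i e \<notin> ring_link ts fl ` {..<length ts}"
    using ring_link_neq_block_edge[OF assms] by (metis imageE)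
  moreover have "e \<noteq> {}"
    using pole_edge_doubleton[OF assms] by auto
  ultimately obtain i' e' where "i' < length ts" "e' \<in> pole_cover_matching j (ts ! i')"
    and "block_edge i e = block_edge i' e'"
    unfolding cover_matching_def by (auto split: if_splits)
  with \<open>e \<noteq> {}\<close> show "i < length ts \<and> e \<in> pole_cover_matching j (ts ! i)"
    by (simp add: block_edge_eq_iff)
qed (auto simp: cover_matching_def)

lemma ring_link_mem_cover_matching:
  assumes "k < length ts" and "j < 3"
  shows "ring_link ts fl k \<in> cover_matching ts fl j \<longleftrightarrow> j = 0"
proof -
  have "ring_link ts fl k \<notin> (\<Union>i<length ts. block_edge i ` pole_cover_matching j (ts ! i))"
    using ring_link_neq_block_edge pole_cover_matching_subset[OF assms(2)] by blast
  then show ?thesis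
    using assms(1) unfolding cover_matching_def by auto
qed

lemma cover_matching_subset:
  assumes "j < 3"
  shows "cover_matching ts fl j \<subseteq> ring_edges ts fl"
proof -
  have "(\<Union>i<length ts. block_edge i ` pole_cover_matching j (ts ! i)) \<subseteq> ring_edges ts fl"
    using pole_cover_matching_subset[OF assms]
    unfolding ring_edges_eq_UN_block_edge_lists set_block_edge_list by (intro UN_mono) auto
  moreover have "ring_link ts fl ` {..<length ts} \<subseteq> ring_edges ts fl"
    unfolding ring_edges_eq_UN_block_edge_lists set_block_edge_list by auto
  ultimately show ?thesis
    unfolding cover_matching_def by simp
qed

lemma perfect_matching_cover_matching:
  assumes "j < 3"
  shows "perfect_matching (ring_verts ts) (ring_edges ts fl) (cover_matching ts fl j)"
  unfolding perfect_matching_ring_iff[OF cover_matching_subset[OF assms]]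
proof (intro allI impI ballI)
  fix i v assume i: "i < length ts" and v: "v \<in> pole_verts (ts ! i)"
  obtain k where "k < length ts" "dangling_link ts fl i v = ring_link ts fl k"
    using dangling_link_in_ring_links[OF i] by blast
  then have link: "dangling_link ts fl i v \<in> cover_matching ts fl j \<longleftrightarrow> j = 0"
    using ring_link_mem_cover_matching assms by simp
  have inner: "map (\<lambda>e. block_edge i e \<in> cover_matching ts fl j) (filter (\<lambda>e. v \<in> e) (pole_edge_list (ts ! i))) =
      map (\<lambda>e. e \<in> pole_cover_matching j (ts ! i)) (filter (\<lambda>e. v \<in> e) (pole_edge_list (ts ! i)))"
    using i block_edge_mem_cover_matching by (auto simp: set_pole_edge_list)
  show "exactly_one (map (\<lambda>e. e \<in> cover_matching ts fl j) (incident_edge_list ts fl i v))"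
    unfolding map_mem_incident_edge_list link inner by (rule exactly_one_pole_cover_matching[OF assms v])
qed

lemma cover_matchings_block_count:
  assumes "i < length ts"
  shows "length (filter (\<lambda>e. e \<in> cover_matching ts fl 0 \<union> cover_matching ts fl 1 \<union> cover_matching ts fl 2)
      (block_edge_list ts fl i)) = (if ts ! i then 12 else 6)"
proof -
  have "length (filter (\<lambda>e. e \<in> pole_cover_matching 0 t \<or> e \<in> pole_cover_matching 1 t \<or>
      e \<in> pole_cover_matching 2 t) (pole_edge_list t)) = (if t then 11 else 5)" for t
    unfolding pole_cover_matching_def pole_edge_list_def by (cases t) (simp_all add: doubleton_eq_iff)
  moreover have "filter (\<lambda>e. block_edge i e \<in> cover_matching ts fl 0 \<union> cover_matching ts fl 1 \<union> cover_matching ts fl 2)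
      (pole_edge_list (ts ! i)) =
    filter (\<lambda>e. e \<in> pole_cover_matching 0 (ts ! i) \<or> e \<in> pole_cover_matching 1 (ts ! i) \<or>
      e \<in> pole_cover_matching 2 (ts ! i)) (pole_edge_list (ts ! i))"
    using assms block_edge_mem_cover_matching by (intro filter_cong) (auto simp: set_pole_edge_list)
  moreover have "ring_link ts fl i \<in> cover_matching ts fl 0"
    using ring_link_mem_cover_matching[OF assms] by simp
  ultimately show ?thesis
    unfolding block_edge_list_def by (simp add: filter_map comp_def)
qed

lemma card_union_cover_matchings:
  "card (cover_matching ts fl 0 \<union> cover_matching ts fl 1 \<union> cover_matching ts fl 2) =
     12 * length (filter id ts) + 6 * length (filter Not ts)"
proof -
  have "cover_matching ts fl 0 \<union> cover_matching ts fl 1 \<union> cover_matching ts fl 2 \<subseteq> ring_edges ts fl"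
    using cover_matching_subset[of _ ts fl] by simp
  then have "card (cover_matching ts fl 0 \<union> cover_matching ts fl 1 \<union> cover_matching ts fl 2) =
      (\<Sum>i<length ts. length (filter (\<lambda>e. e \<in> cover_matching ts fl 0 \<union> cover_matching ts fl 1 \<union>
        cover_matching ts fl 2) (block_edge_list ts fl i)))"
    by (rule card_ring_subset)
  also have "\<dots> = (\<Sum>i<length ts. if ts ! i then 12 else 6)"
    by (rule sum.cong) (simp_all only: lessThan_iff cover_matchings_block_count)
  finally show ?thesis
    by (simp add: sum_nth_bool_if)
qed

lemma m3_eqI:
  assumes "\<And>M1 M2 M3. perfect_matching V E M1 \<Longrightarrow> perfect_matching V E M2 \<Longrightarrow> perfect_matching V E M3 \<Longrightarrow>
      card (M1 \<union> M2 \<union> M3) \<le> N"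
    and "perfect_matching V E P" "perfect_matching V E Q" "perfect_matching V E R"
    and "card (P \<union> Q \<union> R) = N"
  shows "m3 V E = real N / real (card E)"
proof -
  let ?C = "{card (M1 \<union> M2 \<union> M3) | M1 M2 M3.
    perfect_matching V E M1 \<and> perfect_matching V E M2 \<and> perfect_matching V E M3}"
  have "?C \<subseteq> {..N}"
    using assms(1) by auto
  moreover have "N \<in> ?C"
    using assms(2-5) by blast
  ultimately have "Max ?C = N"
    by (intro Max_eqI) (auto intro: finite_subset)
  then show ?thesis
    unfolding m3_def by simp
qed

theorem lemma3:
  fixes a b :: nat and ts :: "bool list" and fl :: "nat \<Rightarrow> bool"
  assumes "a \<ge> 1"
    and "length (filter id ts) = a"
    and "length (filter Not ts) = b"
  shows "m3 (ring_verts ts) (ring_edges ts fl) = (4 * real a + 2 * real b) / (5 * real a + 2 * real b)"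
proof -
  have "m3 (ring_verts ts) (ring_edges ts fl) = real (12 * a + 6 * b) / real (card (ring_edges ts fl))"
    using card_union_perfect_matchings_le perfect_matching_cover_matching card_union_cover_matchings assms(2,3)
    by (intro m3_eqI[where P = "cover_matching ts fl 0" and Q = "cover_matching ts fl 1"
          and R = "cover_matching ts fl 2"]) auto
  also have "\<dots> = real (12 * a + 6 * b) / real (15 * a + 6 * b)"
    using card_ring_edges assms(2,3) by simp
  also have "\<dots> = (3 * (4 * real a + 2 * real b)) / (3 * (5 * real a + 2 * real b))"
    by simp
  also have "\<dots> = (4 * real a + 2 * real b) / (5 * real a + 2 * real b)"
    by (rule mult_divide_mult_cancel_left) simp
  finally show ?thesis .
qed

end
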